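(* Let $n\ge 3$ and let $C_n$ be the cycle on vertex set $[n]$ with edges $\{i,i+1\}$ for $1\le i\le n-1$ and $\{1,n\}$ (the standard labeling). Then for every positive integer $t$, the independence complex $\Delta(C_n)$ is $t$-sortable with respect to this labeling, i.e. for all independent sets $A,B$ of $C_n$ with $|A|=|B|=t$, both components of $\mathrm{sort}(A,B)$ are independent sets of $C_n$.
   Context: The independence complex $\Delta(G)$ is the simplicial complex of independent sets of $G$. For finite $F,G\subset\mathbb{N}$ with $|F|=r,|G|=s$, write $\mathbf{x}^F\mathbf{x}^G=x_{i_1}\cdots x_{i_{r+s}}$ with $i_1\le\cdots\le i_{r+s}$ (where $\mathbf{x}^F=\prod_{i\in F}x_i$) and set $\mathrm{sort}(F,G)=(\{i_k:k\text{ odd}\},\{i_k:k\text{ even}\})$. A simplicial complex $\Delta$ with $V(\Delta)\subset\mathbb{N}$ is $t$-sortable with respect to the given labeling if $\mathrm{sort}(F,G)\in\Delta\times\Delta$ for all $F,G\in\Delta$ with $|F|=|G|=t$. *)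

theory Defs
  imports Main
begin

definition independence_complex :: "nat set \<Rightarrow> nat set set \<Rightarrow> nat set set" where
  "independence_complex V E = {S. S \<subseteq> V \<and> (\<forall>e\<in>E. \<not> e \<subseteq> S)}"

definition cycle_vertices :: "nat \<Rightarrow> nat set" where
  "cycle_vertices n = {1..n}"

definition cycle_edges :: "nat \<Rightarrow> nat set set" where
  "cycle_edges n = {{i, i + 1} | i. 1 \<le> i \<and> i \<le> n - 1} \<union> {{1, n}}"

text \<open>sort(F,G): sort the multiset union of F and G as i_1 <= ... <= i_{r+s};
  first component = entries at odd positions, second = entries at even positions
  (1-indexed), i.e. 0-indexed even / odd positions of the sorted list.\<close>
definition sort_merge :: "nat set \<Rightarrow> nat set \<Rightarrow> nat list" where
  "sort_merge F G = sort (sorted_list_of_set F @ sorted_list_of_set G)"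

definition sort_pair :: "nat set \<Rightarrow> nat set \<Rightarrow> nat set \<times> nat set" where
  "sort_pair F G =
     (let L = sort_merge F G in
       ({L ! k | k. k < length L \<and> even k}, {L ! k | k. k < length L \<and> odd k}))"

definition t_sortable :: "nat set set \<Rightarrow> nat \<Rightarrow> bool" where
  "t_sortable \<Delta> t \<longleftrightarrow>
     (\<forall>F\<in>\<Delta>. \<forall>G\<in>\<Delta>. card F = t \<and> card G = t \<longrightarrow> sort_pair F G \<in> \<Delta> \<times> \<Delta>)"

end

theory Submission
  imports Defs "HOL-Library.Multiset"
begin

text \<open>Let \<open>L\<close> be the sorted merge of two independent sets \<open>A\<close>, \<open>B\<close> of \<open>C\<^sub>n\<close>.
  An edge \<open>{a, c}\<close> meets \<open>A\<close> and \<open>B\<close> in at most one vertex each, so at most two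
  entries of \<open>L\<close> lie in \<open>{a, c}\<close>. For the edges \<open>{v, v + 1}\<close> this forces
  \<open>L!k + 2 \<le> L!(k + 2)\<close>, hence entries of the same parity differ by at least 2.
  For the edge \<open>{1, n}\<close>: if \<open>1\<close> and \<open>n\<close> both occur, they are the first and the
  last entry of \<open>L\<close>, whose positions have different parities since \<open>|L| = 2t\<close>;
  so if both occurred at positions of one parity, \<open>L\<close> would have three entries
  in \<open>{1, n}\<close>.\<close>

lemma set_sort_merge: "finite F \<Longrightarrow> finite G \<Longrightarrow> set (sort_merge F G) = F \<union> G"
  by (simp add: sort_merge_def)

lemma length_sort_merge: "finite F \<Longrightarrow> finite G \<Longrightarrow> length (sort_merge F G) = card F + card G"
  by (simp add: sort_merge_def)

lemma sorted_sort_merge: "sorted (sort_merge F G)"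
  by (simp add: sort_merge_def)

definition sort_part :: "nat set \<Rightarrow> nat set \<Rightarrow> bool \<Rightarrow> nat set" where
  "sort_part F G b = {sort_merge F G ! k | k. k < length (sort_merge F G) \<and> even k = b}"

lemma sort_partE:
  assumes "x \<in> sort_part F G b"
  obtains k where "k < length (sort_merge F G)" "even k = b" "sort_merge F G ! k = x"
  using assms unfolding sort_part_def by blast

lemma sort_pair_eq_sort_part: "sort_pair F G = (sort_part F G True, sort_part F G False)"
  by (simp add: sort_pair_def sort_part_def Let_def)

lemma sort_part_subset:
  "finite F \<Longrightarrow> finite G \<Longrightarrow> sort_part F G b \<subseteq> F \<union> G"
  by (auto simp: sort_part_def set_sort_merge[symmetric])

lemma card_le_length_filter:
  assumes "I \<subseteq> {i. i < length xs \<and> P (xs ! i)}"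
  shows "card I \<le> length (filter P xs)"
proof -
  have "card I \<le> card {i. i < length xs \<and> P (xs ! i)}"
    using assms by (intro card_mono) auto
  then show ?thesis by (simp add: length_filter_conv_card)
qed

lemma card_Int_doubleton_le_1:
  assumes "\<not> {a, b} \<subseteq> A"
  shows "card (A \<inter> {a, b}) \<le> 1"
proof -
  have "A \<inter> {a, b} \<subseteq> {a} \<or> A \<inter> {a, b} \<subseteq> {b}" using assms by auto
  then show ?thesis
    using card_mono[of "{a}" "A \<inter> {a, b}"] card_mono[of "{b}" "A \<inter> {a, b}"] by auto
qed

lemma length_filter_sort_merge:
  assumes "finite F" "finite G"
  shows "length (filter P (sort_merge F G)) = card (F \<inter> {x. P x}) + card (G \<inter> {x. P x})"
proof -
  have card_eq: "length (filter P (sorted_list_of_set S)) = card (S \<inter> {x. P x})" if "finite S"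
    for S :: "nat set"
    using that by (simp add: distinct_card[symmetric] Int_def conj_commute)
  have "length (filter P (sort_merge F G)) = size (filter_mset P (mset (sort_merge F G)))"
    by (simp flip: mset_filter)
  also have "\<dots> = length (filter P (sorted_list_of_set F)) + length (filter P (sorted_list_of_set G))"
    by (simp add: sort_merge_def flip: mset_filter)
  finally show ?thesis using assms by (simp add: card_eq)
qed

lemma length_filter_sort_merge_doubleton_le_2:
  assumes "finite F" "finite G" "\<not> {a, c} \<subseteq> F" "\<not> {a, c} \<subseteq> G"
  shows "length (filter (\<lambda>x. x = a \<or> x = c) (sort_merge F G)) \<le> 2"
proof -
  have "{x. x = a \<or> x = c} = {a, c}" by auto
  then show ?thesis
    using assms card_Int_doubleton_le_1[OF assms(3)] card_Int_doubleton_le_1[OF assms(4)]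
    by (simp add: length_filter_sort_merge)
qed

lemma sort_merge_nth_add_2_le:
  fixes F G :: "nat set"
  defines "L \<equiv> sort_merge F G"
  assumes "finite F" "finite G" "\<And>v. \<not> {v, v + 1} \<subseteq> F" "\<And>v. \<not> {v, v + 1} \<subseteq> G"
    and "k + 2 < length L"
  shows "L ! k + 2 \<le> L ! (k + 2)"
proof (rule ccontr)
  let ?P = "\<lambda>x. x = L ! k \<or> x = L ! k + 1"
  assume "\<not> ?thesis"
  moreover have "L ! k \<le> L ! (k + 1)" "L ! (k + 1) \<le> L ! (k + 2)"
    using sorted_sort_merge assms(6) unfolding L_def by (auto intro: sorted_nth_mono)
  ultimately have "card {k, k + 1, k + 2} \<le> length (filter ?P L)"
    using assms(6) by (intro card_le_length_filter) auto
  moreover have "length (filter ?P L) \<le> 2"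
    unfolding L_def by (intro length_filter_sort_merge_doubleton_le_2) (use assms in auto)
  ultimately show False by simp
qed

lemma sort_part_no_consecutive:
  assumes "finite F" "finite G" "\<And>v. \<not> {v, v + 1} \<subseteq> F" "\<And>v. \<not> {v, v + 1} \<subseteq> G"
  shows "\<not> {v, v + 1} \<subseteq> sort_part F G b"
proof
  let ?L = "sort_merge F G"
  have gap: "?L ! k + 2 \<le> ?L ! j" if "k < j" "j < length ?L" "even k = even j" for k j
  proof -
    have "k + 2 \<le> j" using that by presburger
    then have "?L ! (k + 2) \<le> ?L ! j"
      using sorted_sort_merge that by (auto intro: sorted_nth_mono)
    then show ?thesis using sort_merge_nth_add_2_le[OF assms, of k] \<open>k + 2 \<le> j\<close> that by auto
  qed
  assume "{v, v + 1} \<subseteq> sort_part F G b"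
  then obtain k j where "?L ! k = v" "?L ! j = v + 1" "k < length ?L" "j < length ?L"
    "even k = b" "even j = b"
    by (metis insert_subset sort_partE)
  then show False using gap[of k j] gap[of j k] by (cases k j rule: linorder_cases) auto
qed

lemma sort_part_no_extremes:
  assumes "finite F" "finite G" "\<not> {a, c} \<subseteq> F" "\<not> {a, c} \<subseteq> G"
    and "F \<union> G \<subseteq> {a..c}" "a < c" "card F = card G"
  shows "\<not> {a, c} \<subseteq> sort_part F G b"
proof
  let ?L = "sort_merge F G"
  let ?m = "length ?L - 1"
  assume "{a, c} \<subseteq> sort_part F G b"
  then obtain k j where kj: "?L ! k = a" "?L ! j = c" "k < length ?L" "j < length ?L"
    "even k = b" "even j = b"
    by (metis insert_subset sort_partE)
  have range: "a \<le> ?L ! i \<and> ?L ! i \<le> c" if "i < length ?L" for i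
    using nth_mem[OF that] assms(1,2,5) by (auto simp: set_sort_merge)
  have "?L ! 0 \<le> ?L ! k" "?L ! j \<le> ?L ! ?m"
    using kj by (auto intro: sorted_nth_mono[OF sorted_sort_merge])
  moreover have "a \<le> ?L ! 0" "?L ! ?m \<le> c"
  proof -
    have "0 < length ?L" using kj(3) by linarith
    then show "a \<le> ?L ! 0" "?L ! ?m \<le> c" using range[of 0] range[of ?m] by auto
  qed
  ultimately have first: "?L ! 0 = a" and last: "?L ! ?m = c"
    using kj by auto
  have "length ?L = 2 * card G"
    using assms(1,2,7) by (simp add: length_sort_merge)
  then have "odd ?m"
    using kj(3) by (cases "card G") auto
  then obtain i where i: "i < length ?L" "i \<noteq> 0" "i \<noteq> ?m" "?L ! i = a \<or> ?L ! i = c"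
  proof (cases b)
    case True
    then have "j \<noteq> ?m" using kj(6) \<open>odd ?m\<close> by metis
    moreover have "j \<noteq> 0" using kj(2) first \<open>a < c\<close> by (metis less_irrefl)
    ultimately show ?thesis using that[of j] kj by auto
  next
    case False
    then have "k \<noteq> 0" using kj(5) by (auto intro: odd_pos)
    moreover have "k \<noteq> ?m" using kj(1) last \<open>a < c\<close> by (metis less_irrefl)
    ultimately show ?thesis using that[of k] kj by auto
  qed
  have "card {0, i, ?m} \<le> length (filter (\<lambda>x. x = a \<or> x = c) ?L)"
    using i first last by (intro card_le_length_filter) auto
  moreover have "card {0, i, ?m} = 3"
    using i \<open>odd ?m\<close> by (auto simp: card_insert_if)
  moreover have "length (filter (\<lambda>x. x = a \<or> x = c) ?L) \<le> 2"
    using assms by (intro length_filter_sort_merge_doubleton_le_2)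
  ultimately show False by linarith
qed

lemma cycle_independent_iff:
  "S \<in> independence_complex (cycle_vertices n) (cycle_edges n) \<longleftrightarrow>
     S \<subseteq> {1..n} \<and> (\<forall>v. \<not> {v, v + 1} \<subseteq> S) \<and> \<not> {1, n} \<subseteq> S"
proof
  assume "S \<in> independence_complex (cycle_vertices n) (cycle_edges n)"
  then have sub: "S \<subseteq> {1..n}" and indep: "\<And>e. e \<in> cycle_edges n \<Longrightarrow> \<not> e \<subseteq> S"
    by (auto simp: independence_complex_def cycle_vertices_def)
  have "{v, v + 1} \<in> cycle_edges n" if "{v, v + 1} \<subseteq> S" for v
  proof -
    have "1 \<le> v" "v \<le> n - 1" using that sub by auto
    then show ?thesis unfolding cycle_edges_def by blast
  qed
  moreover have "{1, n} \<in> cycle_edges n" by (simp add: cycle_edges_def)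
  ultimately show "S \<subseteq> {1..n} \<and> (\<forall>v. \<not> {v, v + 1} \<subseteq> S) \<and> \<not> {1, n} \<subseteq> S"
    using sub indep by blast
next
  assume "S \<subseteq> {1..n} \<and> (\<forall>v. \<not> {v, v + 1} \<subseteq> S) \<and> \<not> {1, n} \<subseteq> S"
  then show "S \<in> independence_complex (cycle_vertices n) (cycle_edges n)"
    unfolding independence_complex_def cycle_vertices_def cycle_edges_def by auto
qed

theorem proposition1p11:
  fixes n t :: nat
  assumes "n \<ge> 3" and "t > 0"
  shows "t_sortable (independence_complex (cycle_vertices n) (cycle_edges n)) t"
  unfolding t_sortable_def sort_pair_eq_sort_part
proof (intro ballI impI)
  fix A B
  assume "A \<in> independence_complex (cycle_vertices n) (cycle_edges n)"
    and "B \<in> independence_complex (cycle_vertices n) (cycle_edges n)"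
    and card: "card A = t \<and> card B = t"
  then have A: "A \<subseteq> {1..n}" "\<And>v. \<not> {v, v + 1} \<subseteq> A" "\<not> {1, n} \<subseteq> A"
    and B: "B \<subseteq> {1..n}" "\<And>v. \<not> {v, v + 1} \<subseteq> B" "\<not> {1, n} \<subseteq> B"
    by (auto simp: cycle_independent_iff)
  have fin: "finite A" "finite B" using A(1) B(1) finite_subset by auto
  have "sort_part A B b \<in> independence_complex (cycle_vertices n) (cycle_edges n)" for b
    unfolding cycle_independent_iff
    using sort_part_subset[OF fin, of b] A B card \<open>n \<ge> 3\<close>
      sort_part_no_consecutive[OF fin A(2) B(2)] sort_part_no_extremes[OF fin A(3) B(3)]
    by auto
  then show "(sort_part A B True, sort_part A B False) \<in>
      independence_complex (cycle_vertices n) (cycle_edges n) \<times>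
      independence_complex (cycle_vertices n) (cycle_edges n)"
    by simp
qed

end
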